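(* For every BIMS channel with capacity $C$, the channel dispersion satisfies $$V^{\rm bec}(C)\le V\le V^{\rm bsc}(C).$$
   Context: A BIMS (binary-input memoryless symmetric) channel is a memoryless channel with input alphabet $\{x_0,x_1\}$, finite output alphabet $\mathcal Y$ and transition probabilities $P_{Y|X}(y|x)$. It is symmetric in Gallager's sense: the columns of the $2\times|\mathcal Y|$ transition matrix (rows indexed by inputs) can be partitioned into submatrices such that, in each submatrix, every row is a permutation of every other row and every column is a permutation of every other column. Inputs are equiprobable and logarithms are base 2. The capacity $C$ is $I(X;Y)$ under equiprobable inputs. For $\rho>-1$, $$F(\rho)=\sum_{x}\tfrac12\sum_{y:\,P_{Y|X}(y|x)>0}P_{Y|X}(y|x)\left(\frac{\tfrac12\sum_{x'}P_{Y|X}(y|x')^{1/(1+\rho)}}{P_{Y|X}(y|x)^{1/(1+\rho)}}\right)^{\rho},$$ and $E_0(\rho)=-\log F(\rho)$. The dispersion is $V=-E_0''(0)$. $V^{\rm bec}(C)$ and $V^{\rm bsc}(C)$ are $-\frac{d^2}{d\rho^2}\bigl(-\log F^{\rm bec}(\rho;C)\bigr)\big|_{\rho=0}$ and $-\frac{d^2}{d\rho^2}\bigl(-\log F^{\rm bsc}(\rho;C)\bigr)\big|_{\rho=0}$, respectively, where $$F^{\rm bec}(\rho;C)=1+(2^{-\rho}-1)C,$$ $$F^{\rm bsc}(\rho;C)=2^{-\rho}\bigl(\varepsilon^{1/(1+\rho)}+(1-\varepsilon)^{1/(1+\rho)}\bigr)^{1+\rho},\qquad \varepsilon=h^{-1}(1-C),$$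 $h$ is the binary entropy function and $h^{-1}$ its inverse on $[0,\tfrac12]$. *)

theory Defs
  imports "HOL-Analysis.Analysis" "HOL-Library.Multiset" "HOL-Library.Disjoint_Sets"
begin

(* A binary-input channel with finite output alphabet 'y: W x y = P_{Y|X}(y|x),
   inputs x0 = False, x1 = True. *)

definition channel :: "(bool \<Rightarrow> 'y::finite \<Rightarrow> real) \<Rightarrow> bool" where
  "channel W \<longleftrightarrow> (\<forall>x y. 0 \<le> W x y) \<and> (\<forall>x. (\<Sum>y\<in>UNIV. W x y) = 1)"

definition gallager_symmetric :: "(bool \<Rightarrow> 'y::finite \<Rightarrow> real) \<Rightarrow> bool" where
  "gallager_symmetric W \<longleftrightarrow>
     (\<exists>P. partition_on (UNIV :: 'y set) P \<and>
        (\<forall>B\<in>P.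
           (\<forall>x x'. image_mset (W x) (mset_set B) = image_mset (W x') (mset_set B)) \<and>
           (\<forall>y\<in>B. \<forall>y'\<in>B. image_mset (\<lambda>x. W x y) (mset_set UNIV)
                              = image_mset (\<lambda>x. W x y') (mset_set UNIV))))"

definition bims :: "(bool \<Rightarrow> 'y::finite \<Rightarrow> real) \<Rightarrow> bool" where
  "bims W \<longleftrightarrow> channel W \<and> gallager_symmetric W"

definition capacity :: "(bool \<Rightarrow> 'y::finite \<Rightarrow> real) \<Rightarrow> real" where
  "capacity W = (\<Sum>x\<in>UNIV. (1/2) * (\<Sum>y\<in>{y. W x y > 0}.
       W x y * log 2 (W x y / ((1/2) * (\<Sum>x'\<in>UNIV. W x' y)))))"

definition gallF :: "(bool \<Rightarrow> 'y::finite \<Rightarrow> real) \<Rightarrow> real \<Rightarrow> real" where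
  "gallF W \<rho> = (\<Sum>x\<in>UNIV. (1/2) * (\<Sum>y\<in>{y. W x y > 0}.
       W x y * (((1/2) * (\<Sum>x'\<in>UNIV. W x' y powr (1 / (1 + \<rho>))))
                 / (W x y powr (1 / (1 + \<rho>)))) powr \<rho>))"

definition E0 :: "(bool \<Rightarrow> 'y::finite \<Rightarrow> real) \<Rightarrow> real \<Rightarrow> real" where
  "E0 W \<rho> = - log 2 (gallF W \<rho>)"

definition dispersion :: "(bool \<Rightarrow> 'y::finite \<Rightarrow> real) \<Rightarrow> real" where
  "dispersion W = - deriv (deriv (E0 W)) 0"

(* binary entropy (base 2); note 0 * log 2 0 = 0 in Isabelle *)
definition bin_entropy :: "real \<Rightarrow> real" where
  "bin_entropy p = - p * log 2 p - (1 - p) * log 2 (1 - p)"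

definition bin_entropy_inv :: "real \<Rightarrow> real" where
  "bin_entropy_inv t = (THE e. 0 \<le> e \<and> e \<le> 1/2 \<and> bin_entropy e = t)"

definition F_bec :: "real \<Rightarrow> real \<Rightarrow> real" where
  "F_bec \<rho> C = 1 + (2 powr (-\<rho>) - 1) * C"

definition F_bsc :: "real \<Rightarrow> real \<Rightarrow> real" where
  "F_bsc \<rho> C = (let \<epsilon> = bin_entropy_inv (1 - C) in
      2 powr (-\<rho>) * (\<epsilon> powr (1 / (1 + \<rho>)) + (1 - \<epsilon>) powr (1 / (1 + \<rho>))) powr (1 + \<rho>))"

definition V_bec :: "real \<Rightarrow> real" where
  "V_bec C = - deriv (deriv (\<lambda>\<rho>. - log 2 (F_bec \<rho> C))) 0"

definition V_bsc :: "real \<Rightarrow> real" where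
  "V_bsc C = - deriv (deriv (\<lambda>\<rho>. - log 2 (F_bsc \<rho> C))) 0"

end

theory Submission
  imports Defs "HOL-Real_Asymp.Real_Asymp"
begin

text \<open>Write an output column of the channel as \<open>(a, b) = (W x\<^sub>0 y, W x\<^sub>1 y)\<close>, with weight
  \<open>w = (a + b)/2\<close> and posterior \<open>p = a/(a + b)\<close>. Gallager's function \<open>F\<close> and the capacity split into sums
  over columns, and the column contributes \<open>w m(p)\<close> to \<open>C ln 2\<close> and \<open>w s(p)\<close> to \<open>F''(0)\<close>, where
  \<open>m(p)\<close> and \<open>s(p)\<close> are the mean and the mean square of the information density of the
  BSC with crossover \<open>p\<close>. Hence \<open>V ln 2 = \<Sum> w s(p) - (C ln 2)\<^sup>2\<close>.
  For \<open>p \<in> [0, 1/2]\<close> the curve \<open>(m(p), s(p))\<close> is the graph of a concave function of \<open>m\<close>, running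
  from \<open>(ln 2, ln\<^sup>2 2)\<close> (noiseless column) to \<open>(0, 0)\<close> (useless column). By concavity the
  average \<open>\<Sum> w s(p)\<close> is at most \<open>s(\<epsilon>)\<close> with \<open>m(\<epsilon>) = C ln 2\<close>, which is the BSC value; by the
  chord it is at least \<open>ln 2 \<cdot> C ln 2\<close>, which is the BEC value.\<close>

section \<open>Information density of the binary symmetric channel\<close>

text \<open>\<open>bsc_mean p\<close> and \<open>bsc_msq p\<close> are the mean and the mean square (in nats) of the information
  density of the BSC with crossover \<open>p\<close> under uniform input; \<open>bsc_slope p\<close> is the ratio of
  their derivatives.\<close>

definition logit :: "real \<Rightarrow> real" where
  "logit p = ln p - ln (1 - p)"

definition bsc_mean :: "real \<Rightarrow> real" where
  "bsc_mean p = p * ln (2 * p) + (1 - p) * ln (2 * (1 - p))"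

definition bsc_msq :: "real \<Rightarrow> real" where
  "bsc_msq p = p * (1 - p) * (logit p)\<^sup>2 + (bsc_mean p)\<^sup>2"

definition bsc_slope :: "real \<Rightarrow> real" where
  "bsc_slope p = 2 + 2 * bsc_mean p + (1 - 2 * p) * logit p"

lemma bsc_mean_sym: "bsc_mean (1 - p) = bsc_mean p"
  by (simp add: bsc_mean_def algebra_simps)

lemma bsc_msq_sym: "bsc_msq (1 - p) = bsc_msq p"
  by (simp add: bsc_msq_def logit_def bsc_mean_sym power2_eq_square algebra_simps)

lemma bsc_mean_0: "bsc_mean 0 = ln 2"
  and bsc_msq_0: "bsc_msq 0 = (ln 2)\<^sup>2"
  and bsc_mean_half: "bsc_mean (1/2) = 0"
  and bsc_msq_half: "bsc_msq (1/2) = 0"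
  by (simp_all add: bsc_mean_def bsc_msq_def logit_def)

lemma bsc_mean_eq_entropy:
  assumes "0 \<le> p" "p \<le> 1"
  shows "bsc_mean p = ln 2 * (1 - bin_entropy p)"
proof -
  have ln2x: "x * ln (2 * x) = x * ln 2 + x * ln x" if "0 \<le> x" for x :: real
    using that by (cases "x = 0") (auto simp: ln_mult algebra_simps)
  have "p * ln (2 * p) = p * ln 2 + p * ln p"
    "(1 - p) * ln (2 * (1 - p)) = (1 - p) * ln 2 + (1 - p) * ln (1 - p)"
    by (rule ln2x; use assms in simp)+
  then have "bsc_mean p = ln 2 + p * ln p + (1 - p) * ln (1 - p)"
    unfolding bsc_mean_def by (simp add: algebra_simps)
  also have "\<dots> = ln 2 * (1 - bin_entropy p)"
    by (simp add: bin_entropy_def log_def right_diff_distrib)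
  finally show ?thesis .
qed

lemma DERIV_logit:
  assumes "0 < p" "p < 1"
  shows "(logit has_real_derivative 1 / (p * (1 - p))) (at p)"
proof -
  have "(logit has_real_derivative 1 / p - (-1) / (1 - p)) (at p)"
    unfolding logit_def[abs_def] using assms by (auto intro!: derivative_eq_intros)
  then show ?thesis using assms by (simp add: field_simps)
qed

lemma DERIV_bsc_mean:
  assumes "0 < p" "p < 1"
  shows "(bsc_mean has_real_derivative logit p) (at p)"
proof -
  have "(bsc_mean has_real_derivative
      ln (2 * p) + p * (2 / (2 * p)) - ln (2 * (1 - p)) + (1 - p) * (-2 / (2 * (1 - p)))) (at p)"
    (is "(_ has_real_derivative ?d) _")
    unfolding bsc_mean_def[abs_def] using assms by (auto intro!: derivative_eq_intros)
  moreover have "?d = logit p"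
    using assms ln_mult[of 2 p] ln_mult[of 2 "1 - p"] by (simp add: logit_def)
  ultimately show ?thesis by simp
qed

lemma DERIV_bsc_msq:
  assumes "0 < p" "p < 1"
  shows "(bsc_msq has_real_derivative logit p * bsc_slope p) (at p)"
proof -
  have "(bsc_msq has_real_derivative
      (1 * (1 - p) + p * (-1)) * (logit p)\<^sup>2 + p * (1 - p) * (2 * logit p * (1 / (p * (1 - p))))
      + 2 * bsc_mean p * logit p) (at p)"
    unfolding bsc_msq_def[abs_def] using assms
    by (auto intro!: derivative_eq_intros DERIV_bsc_mean DERIV_logit)
  moreover have "(1 * (1 - p) + p * (-1)) * (logit p)\<^sup>2
      + p * (1 - p) * (2 * logit p * (1 / (p * (1 - p)))) + 2 * bsc_mean p * logit p
      = logit p * bsc_slope p"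
    using assms by (simp add: bsc_slope_def field_simps power2_eq_square)
  ultimately show ?thesis by simp
qed

lemma DERIV_bsc_slope:
  assumes "0 < p" "p < 1"
  shows "(bsc_slope has_real_derivative (1 - 2 * p) / (p * (1 - p))) (at p)"
proof -
  have "(bsc_slope has_real_derivative
      2 * logit p - 2 * logit p + (1 - 2 * p) * (1 / (p * (1 - p)))) (at p)"
    unfolding bsc_slope_def[abs_def] using assms
    by (auto intro!: derivative_eq_intros DERIV_bsc_mean DERIV_logit)
  then show ?thesis by simp
qed

lemma logit_nonpos: "0 < p \<Longrightarrow> p \<le> 1/2 \<Longrightarrow> logit p \<le> 0"
  and logit_neg: "0 < p \<Longrightarrow> p < 1/2 \<Longrightarrow> logit p < 0"
  by (simp_all add: logit_def)

lemma continuous_on_bsc_mean: "continuous_on {0..1/2} bsc_mean"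
proof (rule continuous_on_IccI)
  have "(bsc_mean \<longlongrightarrow> ln 2) (at_right 0)"
    unfolding bsc_mean_def[abs_def] by real_asymp
  then show "(bsc_mean \<longlongrightarrow> bsc_mean 0) (at_right 0)"
    by (simp add: bsc_mean_0)
  have "isCont bsc_mean x" if "0 < x" "x < 1" for x
    using that by (rule DERIV_isCont[OF DERIV_bsc_mean])
  then show "(bsc_mean \<longlongrightarrow> bsc_mean (1/2)) (at_left (1/2))"
    and "\<And>x. 0 < x \<Longrightarrow> x < 1/2 \<Longrightarrow> (bsc_mean \<longlongrightarrow> bsc_mean x) (at x)"
    by (auto simp: isCont_def filterlim_at_split)
qed simp

lemma continuous_on_bsc_msq: "continuous_on {0..1/2} bsc_msq"
proof (rule continuous_on_IccI)
  have "(bsc_msq \<longlongrightarrow> (ln 2)\<^sup>2) (at_right 0)"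
    unfolding bsc_msq_def[abs_def] bsc_mean_def logit_def by real_asymp
  then show "(bsc_msq \<longlongrightarrow> bsc_msq 0) (at_right 0)"
    by (simp add: bsc_msq_0)
  have "isCont bsc_msq x" if "0 < x" "x < 1" for x
    using that by (rule DERIV_isCont[OF DERIV_bsc_msq])
  then show "(bsc_msq \<longlongrightarrow> bsc_msq (1/2)) (at_left (1/2))"
    and "\<And>x. 0 < x \<Longrightarrow> x < 1/2 \<Longrightarrow> (bsc_msq \<longlongrightarrow> bsc_msq x) (at x)"
    by (auto simp: isCont_def filterlim_at_split)
qed simp

lemma bsc_mean_strict_antimono:
  assumes "0 \<le> p" "p < q" "q \<le> 1/2"
  shows "bsc_mean q < bsc_mean p"
proof -
  have "- bsc_mean p < - bsc_mean q"
  proof (rule DERIV_pos_imp_increasing_open[OF assms(2)])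
    fix t assume "p < t" "t < q"
    with assms show "\<exists>d. ((\<lambda>p. - bsc_mean p) has_real_derivative d) (at t) \<and> 0 < d"
      by (intro exI[of _ "- logit t"]) (auto intro!: derivative_eq_intros DERIV_bsc_mean logit_neg)
  qed (use assms in \<open>intro continuous_on_minus continuous_on_subset[OF continuous_on_bsc_mean], auto\<close>)
  then show ?thesis by simp
qed

lemma bsc_slope_mono:
  assumes "0 < p" "p \<le> q" "q \<le> 1/2"
  shows "bsc_slope p \<le> bsc_slope q"
proof (rule DERIV_nonneg_imp_increasing_open[OF assms(2)])
  fix x assume "p < x" "x < q"
  with assms show "\<exists>y. (bsc_slope has_real_derivative y) (at x) \<and> 0 \<le> y"
    by (intro exI[of _ "(1 - 2 * x) / (x * (1 - x))"]) (auto intro!: DERIV_bsc_slope)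
next
  show "continuous_on {p..q} bsc_slope"
    using assms by (intro continuous_at_imp_continuous_on ballI DERIV_isCont[OF DERIV_bsc_slope]) auto
qed

text \<open>On \<open>[0, 1/2]\<close> the slope \<open>bsc_slope p\<close> increases with \<open>p\<close> while \<open>bsc_mean p\<close> decreases, so
  \<open>bsc_msq\<close> is a concave function of \<open>bsc_mean\<close> and lies below each of its tangents.\<close>

lemma bsc_msq_le_tangent_half:
  assumes "0 < e" "e \<le> 1/2" "0 \<le> p" "p \<le> 1/2"
  shows "bsc_msq p - bsc_slope e * bsc_mean p \<le> bsc_msq e - bsc_slope e * bsc_mean e"
proof -
  let ?\<phi> = "\<lambda>p. bsc_msq p - bsc_slope e * bsc_mean p"
  have D: "(?\<phi> has_real_derivative logit x * (bsc_slope x - bsc_slope e)) (at x)"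
    if "0 < x" "x < 1" for x
    using that by (auto intro!: derivative_eq_intros DERIV_bsc_msq DERIV_bsc_mean simp: algebra_simps)
  have cont: "continuous_on {x..y} ?\<phi>" if "0 \<le> x" "y \<le> 1/2" for x y
    using that by (intro continuous_on_diff continuous_on_mult continuous_on_const
        continuous_on_subset[OF continuous_on_bsc_msq] continuous_on_subset[OF continuous_on_bsc_mean]) auto
  show ?thesis
  proof (cases "p \<le> e")
    case True
    show ?thesis
    proof (rule DERIV_nonneg_imp_increasing_open[OF True, where f = ?\<phi>])
      fix x assume "p < x" "x < e"
      with assms have "0 \<le> logit x * (bsc_slope x - bsc_slope e)"
        by (intro mult_nonpos_nonpos logit_nonpos) (auto simp: bsc_slope_mono)
      with \<open>p < x\<close> \<open>x < e\<close> assms show "\<exists>y. (?\<phi> has_real_derivative y) (at x) \<and> 0 \<le> y"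
        by (intro exI[of _ "logit x * (bsc_slope x - bsc_slope e)"] conjI D) auto
    qed (use assms cont in auto)
  next
    case False
    then have "e \<le> p" by simp
    then show ?thesis
    proof (rule DERIV_nonpos_imp_decreasing_open[where f = ?\<phi>])
      fix x assume "e < x" "x < p"
      with assms have "logit x * (bsc_slope x - bsc_slope e) \<le> 0"
        by (intro mult_nonpos_nonneg logit_nonpos) (auto simp: bsc_slope_mono)
      with \<open>e < x\<close> \<open>x < p\<close> assms show "\<exists>y. (?\<phi> has_real_derivative y) (at x) \<and> y \<le> 0"
        by (intro exI[of _ "logit x * (bsc_slope x - bsc_slope e)"] conjI D) auto
    qed (use assms cont in auto)
  qed
qed

lemma bsc_msq_le_tangent:
  assumes "0 < e" "e \<le> 1/2" "0 \<le> p" "p \<le> 1"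
  shows "bsc_msq p \<le> bsc_msq e + bsc_slope e * (bsc_mean p - bsc_mean e)"
proof (cases "p \<le> 1/2")
  case True
  then show ?thesis using bsc_msq_le_tangent_half[OF assms(1-3)] by (simp add: algebra_simps)
next
  case False
  then show ?thesis using bsc_msq_le_tangent_half[OF assms(1,2), of "1 - p"] assms
    by (simp add: algebra_simps bsc_mean_sym bsc_msq_sym)
qed

lemma bsc_mean_bounds_half:
  assumes "0 \<le> p" "p \<le> 1/2"
  shows "0 \<le> bsc_mean p" "bsc_mean p \<le> ln 2" "bsc_mean p = ln 2 \<longleftrightarrow> p = 0"
proof -
  show "0 \<le> bsc_mean p"
  proof (cases "p = 1/2")
    case False
    then show ?thesis using bsc_mean_strict_antimono[of p "1/2"] assms by (simp add: bsc_mean_half)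
  qed (simp only: bsc_mean_half order_refl)
  show "bsc_mean p \<le> ln 2" "bsc_mean p = ln 2 \<longleftrightarrow> p = 0"
    using bsc_mean_strict_antimono[of 0 p] assms by (cases "p = 0"; simp add: bsc_mean_0)+
qed

lemma bsc_mean_bounds:
  assumes "0 \<le> p" "p \<le> 1"
  shows "0 \<le> bsc_mean p" "bsc_mean p \<le> ln 2" "bsc_mean p = ln 2 \<longleftrightarrow> p = 0 \<or> p = 1"
proof -
  have "0 \<le> bsc_mean p \<and> bsc_mean p \<le> ln 2 \<and> (bsc_mean p = ln 2 \<longleftrightarrow> p = 0 \<or> p = 1)"
  proof (cases "p \<le> 1/2")
    case True
    then show ?thesis using bsc_mean_bounds_half[of p] assms by auto
  next
    case False
    then show ?thesis using bsc_mean_bounds_half[of "1 - p"] assms by (auto simp: bsc_mean_sym)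
  qed
  then show "0 \<le> bsc_mean p" "bsc_mean p \<le> ln 2" "bsc_mean p = ln 2 \<longleftrightarrow> p = 0 \<or> p = 1"
    by auto
qed

text \<open>The chord of the concave curve between its endpoints \<open>p = 0\<close> and \<open>p = 1/2\<close>.\<close>

lemma ln2_bsc_mean_le_bsc_msq:
  assumes "0 \<le> p" "p \<le> 1"
  shows "ln 2 * bsc_mean p \<le> bsc_msq p"
proof (cases "p = 0 \<or> p = 1")
  case True
  then show ?thesis
    using bsc_msq_sym[of 0] bsc_mean_sym[of 0] by (auto simp: bsc_mean_0 bsc_msq_0 power2_eq_square)
next
  case False
  define e where "e = min p (1 - p)"
  have e: "0 < e" "e \<le> 1/2" using assms False by (auto simp: e_def min_def)
  have same: "bsc_mean e = bsc_mean p" "bsc_msq e = bsc_msq p"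
    by (auto simp: e_def min_def bsc_mean_sym bsc_msq_sym)
  let ?u = "bsc_mean e" and ?g = "bsc_msq e" and ?s = "bsc_slope e"
  have at0: "(ln 2)\<^sup>2 \<le> ?g + ?s * (ln 2 - ?u)"
    using bsc_msq_le_tangent[OF e, of 0] by (simp add: bsc_mean_0 bsc_msq_0)
  have at_half: "0 \<le> ?g - ?s * ?u"
    using bsc_msq_le_tangent[OF e, of "1/2"] by (simp add: bsc_mean_half bsc_msq_half)
  have u: "0 \<le> ?u" "?u \<le> ln 2" using e by (simp_all add: bsc_mean_bounds_half)
  have "ln 2 * (ln 2 * ?u) = ?u * (ln 2)\<^sup>2" by (simp add: power2_eq_square)
  also have "\<dots> \<le> ?u * (?g + ?s * (ln 2 - ?u)) + (ln 2 - ?u) * (?g - ?s * ?u)"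
    using mult_left_mono[OF at0 u(1)] mult_nonneg_nonneg[OF _ at_half, of "ln 2 - ?u"] u by linarith
  also have "\<dots> = ln 2 * ?g" by (simp add: algebra_simps)
  finally show ?thesis unfolding same by simp
qed

lemma bin_entropy_inv_bsc_mean:
  assumes "0 \<le> C" "C \<le> 1"
  shows "0 \<le> bin_entropy_inv (1 - C) \<and> bin_entropy_inv (1 - C) \<le> 1/2
    \<and> bsc_mean (bin_entropy_inv (1 - C)) = C * ln 2"
proof -
  have iff: "bin_entropy e = 1 - C \<longleftrightarrow> bsc_mean e = C * ln 2" if "0 \<le> e" "e \<le> 1/2" for e
  proof -
    have "bsc_mean e = C * ln 2 \<longleftrightarrow> ln 2 * (1 - bin_entropy e) = ln 2 * C"
      using that by (simp add: bsc_mean_eq_entropy mult.commute)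
    then show ?thesis by auto
  qed
  obtain e where e: "0 \<le> e" "e \<le> 1/2" "- bsc_mean e = - (C * ln 2)"
    using IVT'[of "\<lambda>p. - bsc_mean p" 0 "- (C * ln 2)" "1/2"] assms
      continuous_on_minus[OF continuous_on_bsc_mean]
    by (auto simp: bsc_mean_0 bsc_mean_half)
  have uniq: "e' = e" if "0 \<le> e'" "e' \<le> 1/2" "bsc_mean e' = bsc_mean e" for e'
  proof (rule ccontr)
    assume "e' \<noteq> e"
    then consider "e' < e" | "e < e'" by linarith
    then show False
      using bsc_mean_strict_antimono[of e' e] bsc_mean_strict_antimono[of e e'] that e(1,2)
      by cases simp_all
  qed
  have "bin_entropy_inv (1 - C) = e"
    unfolding bin_entropy_inv_def
  proof (rule the_equality)
    show "0 \<le> e \<and> e \<le> 1/2 \<and> bin_entropy e = 1 - C" using e iff by simp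
    fix e' assume "0 \<le> e' \<and> e' \<le> 1/2 \<and> bin_entropy e' = 1 - C"
    then show "e' = e" using iff[of e'] e(3) by (intro uniq) auto
  qed
  with e show ?thesis by simp
qed

lemma sum_bsc_msq_le:
  assumes "finite I" "\<And>i. i \<in> I \<Longrightarrow> 0 \<le> w i" "(\<Sum>i\<in>I. w i) = 1"
    and "\<And>i. i \<in> I \<Longrightarrow> 0 \<le> p i \<and> p i \<le> 1"
    and "0 \<le> e" "e \<le> 1/2" "bsc_mean e = (\<Sum>i\<in>I. w i * bsc_mean (p i))"
  shows "(\<Sum>i\<in>I. w i * bsc_msq (p i)) \<le> bsc_msq e"
proof (cases "e = 0")
  case False
  then have e: "0 < e" "e \<le> 1/2" using assms by auto
  have "(\<Sum>i\<in>I. w i * bsc_msq (p i))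
      \<le> (\<Sum>i\<in>I. w i * (bsc_msq e + bsc_slope e * (bsc_mean (p i) - bsc_mean e)))"
    using assms by (intro sum_mono mult_left_mono bsc_msq_le_tangent[OF e]) auto
  also have "\<dots> = bsc_msq e * (\<Sum>i\<in>I. w i)
      + bsc_slope e * ((\<Sum>i\<in>I. w i * bsc_mean (p i)) - bsc_mean e * (\<Sum>i\<in>I. w i))"
    by (simp add: sum.distrib sum_subtractf sum_distrib_left ring_distribs ac_simps)
  also have "\<dots> = bsc_msq e" using assms(3,7) by simp
  finally show ?thesis .
next
  case True
  text \<open>Mean \<open>ln 2\<close> forces every column of positive weight to be noiseless.\<close>
  have "(\<Sum>i\<in>I. w i * (ln 2 - bsc_mean (p i))) = ln 2 * (\<Sum>i\<in>I. w i) - bsc_mean e"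
    unfolding assms(7) by (simp add: right_diff_distrib sum_subtractf sum_distrib_right ac_simps)
  also have "\<dots> = 0" using assms(3) True by (simp add: bsc_mean_0)
  finally have "(\<Sum>i\<in>I. w i * (ln 2 - bsc_mean (p i))) = 0" .
  moreover have nonneg: "0 \<le> w i * (ln 2 - bsc_mean (p i))" if "i \<in> I" for i
    using assms(2,4)[OF that] bsc_mean_bounds(2)[of "p i"] by simp
  ultimately have zero: "w i * (ln 2 - bsc_mean (p i)) = 0" if "i \<in> I" for i
    using sum_nonneg_eq_0_iff[OF assms(1) nonneg] that by auto
  have "w i * bsc_msq (p i) = w i * bsc_msq e" if "i \<in> I" for i
  proof (cases "w i = 0")
    case False
    then have "bsc_mean (p i) = ln 2" using zero[OF that] by simp
    then have "p i = 0 \<or> p i = 1" using bsc_mean_bounds(3) assms(4)[OF that] by blast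
    then show ?thesis using True bsc_msq_sym[of 0] by auto
  qed simp
  then have "(\<Sum>i\<in>I. w i * bsc_msq (p i)) = (\<Sum>i\<in>I. w i * bsc_msq e)"
    by (rule sum.cong[OF refl])
  also have "\<dots> = bsc_msq e" using assms(3) by (simp add: sum_distrib_right[symmetric])
  finally show ?thesis by simp
qed

section \<open>Output columns of Gallager's function\<close>

definition column_gallF :: "real \<Rightarrow> real \<Rightarrow> real \<Rightarrow> real" where
  "column_gallF a b \<rho> = ((a powr (1 / (1 + \<rho>)) + b powr (1 / (1 + \<rho>))) / 2) powr (1 + \<rho>)"

lemma column_gallF_commute: "column_gallF a b = column_gallF b a"
  by (auto simp: column_gallF_def add.commute)

lemma column_gallF_at_0: "0 \<le> a \<Longrightarrow> 0 \<le> b \<Longrightarrow> column_gallF a b 0 = (a + b) / 2"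
  by (simp add: column_gallF_def)

lemma column_gallF_zero_left:
  assumes "0 \<le> b" "\<rho> > -1"
  shows "column_gallF 0 b \<rho> = b / 2 * exp (- \<rho> * ln 2)"
proof -
  have "(b powr (1 / (1 + \<rho>))) powr (1 + \<rho>) = b" using assms by (simp add: powr_powr)
  moreover have "(2::real) powr (1 + \<rho>) = 2 * exp (\<rho> * ln 2)"
    by (simp add: powr_def distrib_right exp_add)
  ultimately have "column_gallF 0 b \<rho> = b / (2 * exp (\<rho> * ln 2))"
    by (simp add: column_gallF_def powr_divide)
  then show ?thesis by (simp add: exp_minus field_simps)
qed

text \<open>For \<open>a, b > 0\<close> the power sum \<open>a powr (1/(1 + \<rho>)) + b powr (1/(1 + \<rho>))\<close> is
  \<open>exp_moment (ln a) (ln b) 0 \<rho>\<close>, and each moment is the derivative of the previous one up to the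
  factor \<open>-1/(1 + \<rho>)\<^sup>2\<close>. So \<open>column_gallF a b = exp_power_mean (ln a) (ln b)\<close> on \<open>\<rho> > -1\<close>,
  whose logarithmic derivative is \<open>exp_power_mean_logderiv\<close>.\<close>

definition exp_moment :: "real \<Rightarrow> real \<Rightarrow> nat \<Rightarrow> real \<Rightarrow> real" where
  "exp_moment A B k \<rho> = A ^ k * exp (A / (1 + \<rho>)) + B ^ k * exp (B / (1 + \<rho>))"

lemma exp_moment_pos: "0 < exp_moment A B 0 \<rho>"
  by (simp add: exp_moment_def add_pos_pos)

lemma DERIV_exp_moment:
  assumes "\<rho> > -1"
  shows "(exp_moment A B k has_real_derivative - exp_moment A B (Suc k) \<rho> / (1 + \<rho>)\<^sup>2) (at \<rho>)"
proof -
  have "1 + \<rho> \<noteq> 0" using assms by simp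
  then show ?thesis
    unfolding exp_moment_def[abs_def]
    by (auto intro!: derivative_eq_intros simp: divide_simps power2_eq_square)
qed

definition exp_power_mean :: "real \<Rightarrow> real \<Rightarrow> real \<Rightarrow> real" where
  "exp_power_mean A B \<rho> = exp ((1 + \<rho>) * ln (exp_moment A B 0 \<rho> / 2))"

definition exp_power_mean_logderiv :: "real \<Rightarrow> real \<Rightarrow> real \<Rightarrow> real" where
  "exp_power_mean_logderiv A B \<rho> =
     ln (exp_moment A B 0 \<rho> / 2) - exp_moment A B 1 \<rho> / ((1 + \<rho>) * exp_moment A B 0 \<rho>)"

lemma DERIV_exp_power_mean:
  assumes "\<rho> > -1"
  shows "(exp_power_mean A B has_real_derivative
    exp_power_mean A B \<rho> * exp_power_mean_logderiv A B \<rho>) (at \<rho>)"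
proof -
  let ?M = "exp_moment A B"
  have "(exp_power_mean A B has_real_derivative exp_power_mean A B \<rho> * (ln (?M 0 \<rho> / 2)
      + (1 + \<rho>) * ((- ?M 1 \<rho> / (1 + \<rho>)\<^sup>2 / 2) / (?M 0 \<rho> / 2)))) (at \<rho>)"
    unfolding exp_power_mean_def[abs_def] using assms exp_moment_pos[of A B \<rho>]
    by (auto intro!: derivative_eq_intros DERIV_exp_moment simp: ac_simps)
  moreover have "(1 + \<rho>) * ((- ?M 1 \<rho> / (1 + \<rho>)\<^sup>2 / 2) / (?M 0 \<rho> / 2))
      = - ?M 1 \<rho> / ((1 + \<rho>) * ?M 0 \<rho>)"
    using assms by (simp add: divide_simps power2_eq_square)
  ultimately show ?thesis by (simp add: exp_power_mean_logderiv_def)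
qed

lemma DERIV_exp_power_mean_logderiv_at_0:
  "(exp_power_mean_logderiv A B has_real_derivative
    (exp_moment A B 2 0 * exp_moment A B 0 0 - (exp_moment A B 1 0)\<^sup>2) / (exp_moment A B 0 0)\<^sup>2) (at 0)"
proof -
  let ?M = "exp_moment A B"
  have "(exp_power_mean_logderiv A B has_real_derivative (- ?M 1 0 / 2) / (?M 0 0 / 2)
      - ((- ?M 2 0) * ?M 0 0 - ?M 1 0 * (?M 0 0 - ?M 1 0)) / (?M 0 0)\<^sup>2) (at 0)"
    unfolding exp_power_mean_logderiv_def[abs_def] using exp_moment_pos[of A B 0]
    by (auto intro!: derivative_eq_intros DERIV_exp_moment simp: power2_eq_square numeral_2_eq_2)
  then show ?thesis using exp_moment_pos[of A B 0]
    by (simp add: field_simps power2_eq_square)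
qed

lemma column_gallF_derivatives_pos:
  assumes a: "0 < a" and b: "0 < b"
  obtains f1 where "\<And>\<rho>. \<rho> > -1 \<Longrightarrow> (column_gallF a b has_real_derivative f1 \<rho>) (at \<rho>)"
    "(f1 has_real_derivative (a + b) / 2 * bsc_msq (a / (a + b))) (at 0)"
    "f1 0 = - ((a + b) / 2 * bsc_mean (a / (a + b)))"
proof -
  let ?M = "exp_moment (ln a) (ln b)"
  let ?f = "exp_power_mean (ln a) (ln b)" and ?\<psi> = "exp_power_mean_logderiv (ln a) (ln b)"
  have f_eq: "column_gallF a b \<rho> = ?f \<rho>" if "\<rho> > -1" for \<rho>
  proof -
    have "a powr (1 / (1 + \<rho>)) + b powr (1 / (1 + \<rho>)) = ?M 0 \<rho>"
      using a b by (simp add: exp_moment_def powr_def)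
    then show ?thesis using exp_moment_pos[of "ln a" "ln b" \<rho>]
      by (simp add: column_gallF_def exp_power_mean_def powr_def)
  qed
  define n where "n = a + b"
  define q where "q = a / n"
  have n: "0 < n" using a b by (simp add: n_def)
  have q: "1 - q = b / n" "ln q = ln a - ln n" "ln (1 - q) = ln b - ln n"
    using a b n by (simp_all add: q_def n_def field_simps ln_div)
  have M: "?M 0 0 = n" "?M 1 0 = a * ln a + b * ln b" "?M 2 0 = a * (ln a)\<^sup>2 + b * (ln b)\<^sup>2"
    using a b by (simp_all add: exp_moment_def n_def numeral_2_eq_2)
  have f0: "?f 0 = n / 2" using n by (simp add: exp_power_mean_def M)
  have \<psi>0: "?\<psi> 0 = - bsc_mean q"
  proof -
    have "bsc_mean q = a / n * ln (2 * (a / n)) + b / n * ln (2 * (b / n))"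
      unfolding bsc_mean_def q(1) by (simp only: q_def)
    also have "\<dots> = a / n * (ln 2 + ln a - ln n) + b / n * (ln 2 + ln b - ln n)"
      using a b n by (simp add: ln_mult ln_div)
    also have "\<dots> = (a + b) / n * (ln 2 - ln n) + (a * ln a + b * ln b) / n"
      using n by (simp add: field_simps)
    also have "\<dots> = ln 2 - ln n + (a * ln a + b * ln b) / n"
      using n by (simp add: n_def)
    finally show ?thesis
      using n M(2)[unfolded One_nat_def] by (simp add: exp_power_mean_logderiv_def M ln_div)
  qed
  have d\<psi>0: "(?M 2 0 * ?M 0 0 - (?M 1 0)\<^sup>2) / (?M 0 0)\<^sup>2 = q * (1 - q) * (logit q)\<^sup>2"
  proof -
    have "?M 2 0 * ?M 0 0 - (?M 1 0)\<^sup>2 = a * b * (ln a - ln b)\<^sup>2"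
      unfolding M by (simp add: n_def algebra_simps power2_eq_square)
    moreover have "q * (1 - q) = a * b / n\<^sup>2" "logit q = ln a - ln b"
      using q by (simp_all add: q_def logit_def power2_eq_square)
    ultimately show ?thesis by (simp add: M)
  qed
  show ?thesis
  proof
    show "(column_gallF a b has_real_derivative ?f \<rho> * ?\<psi> \<rho>) (at \<rho>)" if "\<rho> > -1" for \<rho>
      by (rule has_field_derivative_transform_within_open[OF DERIV_exp_power_mean[OF that]
            open_greaterThan, of "-1"]) (use that f_eq in auto)
    have "((\<lambda>\<rho>. ?f \<rho> * ?\<psi> \<rho>) has_real_derivative
        ?f 0 * ?\<psi> 0 * ?\<psi> 0 + ?f 0 * (q * (1 - q) * (logit q)\<^sup>2)) (at 0)"
      using DERIV_exp_power_mean_logderiv_at_0[of "ln a" "ln b", unfolded d\<psi>0]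
      by (auto intro!: derivative_eq_intros DERIV_exp_power_mean)
    then show "((\<lambda>\<rho>. ?f \<rho> * ?\<psi> \<rho>) has_real_derivative (a + b) / 2 * bsc_msq (a / (a + b))) (at 0)"
      by (simp add: f0 \<psi>0 bsc_msq_def n_def q_def power2_eq_square algebra_simps)
    show "?f 0 * ?\<psi> 0 = - ((a + b) / 2 * bsc_mean (a / (a + b)))"
      by (simp add: f0 \<psi>0 n_def q_def)
  qed
qed

lemma column_gallF_derivatives_zero_left:
  assumes b: "0 \<le> b"
  obtains f1 where "\<And>\<rho>. \<rho> > -1 \<Longrightarrow> (column_gallF 0 b has_real_derivative f1 \<rho>) (at \<rho>)"
    "(f1 has_real_derivative b / 2 * bsc_msq 0) (at 0)"
    "f1 0 = - (b / 2 * bsc_mean 0)"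
proof
  let ?f1 = "\<lambda>\<rho>. b / 2 * (exp (- \<rho> * ln 2) * (- ln 2))"
  show "(column_gallF 0 b has_real_derivative ?f1 \<rho>) (at \<rho>)" if "\<rho> > -1" for \<rho>
    by (rule has_field_derivative_transform_within_open[where f = "\<lambda>\<rho>. b / 2 * exp (- \<rho> * ln 2)"
          and S = "{-1<..}"]) (use that b column_gallF_zero_left in \<open>auto intro!: derivative_eq_intros\<close>)
  have "(?f1 has_real_derivative b / 2 * (exp (- 0 * ln 2) * (- ln 2) * (- ln 2))) (at 0)"
    by (auto intro!: derivative_eq_intros)
  then show "(?f1 has_real_derivative b / 2 * bsc_msq 0) (at 0)"
    by (simp add: bsc_msq_0 power2_eq_square)
  show "?f1 0 = - (b / 2 * bsc_mean 0)" by (simp add: bsc_mean_0)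
qed

lemma column_gallF_derivatives:
  assumes a: "0 \<le> a" and b: "0 \<le> b"
  obtains f1 where "\<And>\<rho>. \<rho> > -1 \<Longrightarrow> (column_gallF a b has_real_derivative f1 \<rho>) (at \<rho>)"
    "(f1 has_real_derivative (a + b) / 2 * bsc_msq (a / (a + b))) (at 0)"
    "f1 0 = - ((a + b) / 2 * bsc_mean (a / (a + b)))"
proof -
  consider "a = 0" | "0 < a" "b = 0" | "0 < a" "0 < b" using a b by linarith
  then show thesis
  proof cases
    case 1
    show thesis
    proof (rule column_gallF_derivatives_zero_left[OF b])
      fix f1 assume "\<And>\<rho>. \<rho> > -1 \<Longrightarrow> (column_gallF 0 b has_real_derivative f1 \<rho>) (at \<rho>)"
        "(f1 has_real_derivative b / 2 * bsc_msq 0) (at 0)" "f1 0 = - (b / 2 * bsc_mean 0)"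
      with 1 show thesis by (intro that[of f1]) auto
    qed
  next
    case 2
    text \<open>Swap the rows; the posterior becomes \<open>1\<close>, which the symmetry \<open>p \<mapsto> 1 - p\<close> sends to \<open>0\<close>.\<close>
    have same: "bsc_mean (a / (a + b)) = bsc_mean 0" "bsc_msq (a / (a + b)) = bsc_msq 0"
      using 2 bsc_mean_sym[of 0] bsc_msq_sym[of 0] by simp_all
    show thesis
    proof (rule column_gallF_derivatives_zero_left[OF a])
      fix f1 assume "\<And>\<rho>. \<rho> > -1 \<Longrightarrow> (column_gallF 0 a has_real_derivative f1 \<rho>) (at \<rho>)"
        "(f1 has_real_derivative a / 2 * bsc_msq 0) (at 0)" "f1 0 = - (a / 2 * bsc_mean 0)"
      with 2 same show thesis by (intro that[of f1]) (auto simp: column_gallF_commute)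
    qed
  next
    case 3
    then show thesis using column_gallF_derivatives_pos that by blast
  qed
qed

section \<open>Capacity and dispersion as averages over output columns\<close>

lemma deriv2_neg_log2_at_0:
  fixes F dF G :: "real \<Rightarrow> real"
  assumes r: "r > 0"
    and dF: "\<And>x. x \<in> ball 0 r \<Longrightarrow> (F has_real_derivative dF x) (at x)"
    and d2F: "(dF has_real_derivative d2F) (at 0)" and F0: "F 0 = 1"
    and G: "\<And>x. x \<in> ball 0 r \<Longrightarrow> G x = - log 2 (F x)"
  shows "- deriv (deriv G) 0 = (d2F - (dF 0)\<^sup>2) / ln 2"
proof -
  have "isCont F 0" by (rule DERIV_isCont[OF dF]) (use r in simp)
  then have "\<forall>\<^sub>F x in at 0. F x > 0"
    using F0 by (intro order_tendstoD(1)) (auto simp: isCont_def)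
  then obtain s where s: "open s" "0 \<in> s" "\<And>x. x \<in> s \<Longrightarrow> x \<noteq> 0 \<Longrightarrow> F x > 0"
    by (auto simp: eventually_at_topological)
  define S where "S = s \<inter> ball 0 r"
  have S: "open S" "0 \<in> S" "\<And>x. x \<in> S \<Longrightarrow> F x > 0" "\<And>x. x \<in> S \<Longrightarrow> x \<in> ball 0 r"
    using s r F0 by (auto simp: S_def) (metis zero_less_one)
  define G' where "G' x = - (dF x / (F x * ln 2))" for x
  have DERIV_G: "(G has_real_derivative G' x) (at x)" if "x \<in> S" for x
  proof -
    have "((\<lambda>y. log 2 (F y)) has_real_derivative 1 / (ln 2 * F x) * dF x) (at x)"
      by (rule DERIV_chain2[OF DERIV_log[OF S(3)[OF that]] dF[OF S(4)[OF that]]])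
    then have "((\<lambda>y. - log 2 (F y)) has_real_derivative G' x) (at x)"
      using DERIV_minus by (fastforce simp: G'_def mult.commute)
    then show ?thesis
      by (rule has_field_derivative_transform_within_open[OF _ S(1) that])
        (metis G S(4))
  qed
  have "(G' has_real_derivative - ((d2F * (F 0 * ln 2) - dF 0 * (dF 0 * ln 2)) / (F 0 * ln 2)\<^sup>2)) (at 0)"
    unfolding G'_def power2_eq_square using F0 dF[of 0] r
    by (auto intro!: derivative_eq_intros d2F)
  moreover have "(d2F * (F 0 * ln 2) - dF 0 * (dF 0 * ln 2)) / (F 0 * ln 2)\<^sup>2 = (d2F - (dF 0)\<^sup>2) / ln 2"
    using F0 by (simp add: power2_eq_square field_simps)
  ultimately have "(G' has_real_derivative - ((d2F - (dF 0)\<^sup>2) / ln 2)) (at 0)" by simp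
  then have "(deriv G has_real_derivative - ((d2F - (dF 0)\<^sup>2) / ln 2)) (at 0)"
    by (rule has_field_derivative_transform_within_open[OF _ S(1,2)]) (use DERIV_G DERIV_imp_deriv in metis)
  then show ?thesis by (simp add: DERIV_imp_deriv)
qed

text \<open>Output probability and posterior probability of the input \<open>False\<close> under equiprobable
  inputs; by division by zero the posterior of an output of probability \<open>0\<close> is \<open>0\<close>.\<close>

definition output_weight :: "(bool \<Rightarrow> 'y \<Rightarrow> real) \<Rightarrow> 'y \<Rightarrow> real" where
  "output_weight W y = (W False y + W True y) / 2"

definition posterior :: "(bool \<Rightarrow> 'y \<Rightarrow> real) \<Rightarrow> 'y \<Rightarrow> real" where
  "posterior W y = W False y / (W False y + W True y)"

lemma channel_nonneg: "channel W \<Longrightarrow> 0 \<le> W x y"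
  by (simp add: channel_def)

lemma output_weight_nonneg: "channel W \<Longrightarrow> 0 \<le> output_weight W y"
  by (simp add: output_weight_def channel_nonneg)

lemma sum_output_weight: "channel W \<Longrightarrow> (\<Sum>y\<in>UNIV. output_weight W y) = 1"
  by (simp add: channel_def output_weight_def sum.distrib sum_divide_distrib[symmetric])

lemma posterior_bounds: "channel W \<Longrightarrow> 0 \<le> posterior W y \<and> posterior W y \<le> 1"
  using channel_nonneg[of W False y] channel_nonneg[of W True y]
  by (auto simp: posterior_def divide_le_eq_1)

lemma mult_powr_ratio_eq:
  fixes w m \<rho> :: real
  assumes w: "0 < w" and m: "0 \<le> m" and \<rho>: "\<rho> > -1"
  shows "w * (m / w powr (1 / (1 + \<rho>))) powr \<rho> = w powr (1 / (1 + \<rho>)) * m powr \<rho>"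
proof -
  have "1 + \<rho> > 0" using \<rho> by linarith
  then have exponent: "1 - 1 / (1 + \<rho>) * \<rho> = 1 / (1 + \<rho>)" by (simp add: field_simps)
  have "w / w powr (1 / (1 + \<rho>) * \<rho>) = w powr (1 - 1 / (1 + \<rho>) * \<rho>)"
    using w by (simp add: powr_diff)
  also have "\<dots> = w powr (1 / (1 + \<rho>))" unfolding exponent ..
  finally have "w / w powr (1 / (1 + \<rho>) * \<rho>) = w powr (1 / (1 + \<rho>))" .
  moreover have "(m / w powr (1 / (1 + \<rho>))) powr \<rho> = m powr \<rho> / w powr (1 / (1 + \<rho>) * \<rho>)"
    using w m by (simp add: powr_divide powr_powr)
  ultimately show ?thesis by (metis times_divide_eq_right mult.commute)
qed

lemma gallF_eq_sum_column_gallF: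
  fixes W :: "bool \<Rightarrow> 'y::finite \<Rightarrow> real"
  assumes W: "channel W" and \<rho>: "\<rho> > -1"
  shows "gallF W \<rho> = (\<Sum>y\<in>UNIV. column_gallF (W False y) (W True y) \<rho>)"
proof -
  define s where "s = 1 / (1 + \<rho>)"
  define m where "m y = (1/2) * (\<Sum>x'\<in>UNIV. W x' y powr s)" for y
  have m0: "0 \<le> m y" for y by (auto simp: m_def intro!: sum_nonneg)
  have inner: "(\<Sum>y\<in>{y. W x y > 0}. W x y * (m y / (W x y powr s)) powr \<rho>)
      = (\<Sum>y\<in>UNIV. W x y powr s * m y powr \<rho>)" for x
  proof (rule sum.mono_neutral_cong_left)
    show "\<forall>y\<in>UNIV - {y. W x y > 0}. W x y powr s * m y powr \<rho> = 0"
      using channel_nonneg[OF W, of x] by (auto simp: order.order_iff_strict)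
  qed (use m0 \<rho> in \<open>auto simp: s_def mult_powr_ratio_eq\<close>)
  have "gallF W \<rho> = (\<Sum>x\<in>UNIV. (1/2) * (\<Sum>y\<in>UNIV. W x y powr s * m y powr \<rho>))"
    unfolding gallF_def s_def[symmetric] m_def[symmetric] inner ..
  also have "\<dots> = (\<Sum>y\<in>UNIV. \<Sum>x\<in>UNIV. (1/2) * (W x y powr s * m y powr \<rho>))"
    by (simp only: sum_distrib_left) (rule sum.swap)
  also have "\<dots> = (\<Sum>y\<in>UNIV. m y * m y powr \<rho>)"
    by (simp add: m_def sum_distrib_left sum_distrib_right mult.assoc)
  also have "\<dots> = (\<Sum>y\<in>UNIV. m y powr (1 + \<rho>))"
  proof (rule sum.cong[OF refl])
    show "m y * m y powr \<rho> = m y powr (1 + \<rho>)" for y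
      using m0[of y] by (cases "m y = 0") (auto simp: powr_add)
  qed
  also have "\<dots> = (\<Sum>y\<in>UNIV. column_gallF (W False y) (W True y) \<rho>)"
    by (simp add: m_def column_gallF_def s_def UNIV_bool add.commute)
  finally show ?thesis .
qed

lemma bsc_mean_column:
  assumes a: "0 \<le> a" and b: "0 \<le> b"
  shows "(a + b) / 2 * bsc_mean (a / (a + b)) = (a * ln (2 * a / (a + b)) + b * ln (2 * b / (a + b))) / 2"
proof (cases "a + b = 0")
  case False
  define q r where "q = a / (a + b)" and "r = b / (a + b)"
  have r: "1 - q = r" using False by (simp add: q_def r_def field_simps)
  have "(a + b) / 2 * bsc_mean q = ((a + b) * q * ln (2 * q) + (a + b) * r * ln (2 * r)) / 2"
    unfolding bsc_mean_def r by (simp add: field_simps)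
  also have "\<dots> = (a * ln (2 * a / (a + b)) + b * ln (2 * b / (a + b))) / 2"
    using False by (simp add: q_def r_def)
  finally show ?thesis by (simp add: q_def)
qed (use a b in simp)

lemma capacity_eq:
  fixes W :: "bool \<Rightarrow> 'y::finite \<Rightarrow> real"
  assumes W: "channel W"
  shows "capacity W = (\<Sum>y\<in>UNIV. output_weight W y * bsc_mean (posterior W y)) / ln 2"
proof -
  define n where "n y = W False y + W True y" for y
  have inner: "(\<Sum>y\<in>{y. W x y > 0}. W x y * log 2 (W x y / ((1/2) * (\<Sum>x'\<in>UNIV. W x' y))))
      = (\<Sum>y\<in>UNIV. W x y * ln (2 * W x y / n y) / ln 2)" for x
  proof -
    have "(\<Sum>y\<in>{y. W x y > 0}. W x y * log 2 (W x y / ((1/2) * (\<Sum>x'\<in>UNIV. W x' y))))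
       = (\<Sum>y\<in>UNIV. W x y * log 2 (W x y / ((1/2) * (\<Sum>x'\<in>UNIV. W x' y))))"
      using channel_nonneg[OF W, of x] by (intro sum.mono_neutral_left) (auto simp: order.order_iff_strict)
    also have "\<dots> = (\<Sum>y\<in>UNIV. W x y * ln (2 * W x y / n y) / ln 2)"
      by (rule sum.cong[OF refl]) (simp add: log_def n_def UNIV_bool add.commute mult.commute)
    finally show ?thesis .
  qed
  have "capacity W = (\<Sum>x\<in>UNIV. (1/2) * (\<Sum>y\<in>UNIV. W x y * ln (2 * W x y / n y) / ln 2))"
    unfolding capacity_def by (simp only: inner)
  also have "\<dots> = (\<Sum>y\<in>UNIV. \<Sum>x\<in>UNIV. (1/2) * (W x y * ln (2 * W x y / n y) / ln 2))"
    by (simp only: sum_distrib_left) (rule sum.swap)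
  also have "\<dots> = (\<Sum>y\<in>UNIV. output_weight W y * bsc_mean (posterior W y) / ln 2)"
  proof (rule sum.cong[OF refl])
    fix y
    show "(\<Sum>x\<in>UNIV. (1/2) * (W x y * ln (2 * W x y / n y) / ln 2))
        = output_weight W y * bsc_mean (posterior W y) / ln 2"
      unfolding output_weight_def posterior_def
        bsc_mean_column[OF channel_nonneg[OF W] channel_nonneg[OF W]]
      by (simp add: n_def UNIV_bool add_divide_distrib)
  qed
  finally show ?thesis by (simp add: sum_divide_distrib)
qed

lemma dispersion_eq:
  fixes W :: "bool \<Rightarrow> 'y::finite \<Rightarrow> real"
  assumes W: "channel W"
  shows "dispersion W = ((\<Sum>y\<in>UNIV. output_weight W y * bsc_msq (posterior W y))
    - (\<Sum>y\<in>UNIV. output_weight W y * bsc_mean (posterior W y))\<^sup>2) / ln 2"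
proof -
  let ?w = "output_weight W" and ?p = "posterior W"
  have "\<exists>f1. (\<forall>\<rho>>-1. (column_gallF (W False y) (W True y) has_real_derivative f1 \<rho>) (at \<rho>))
      \<and> (f1 has_real_derivative ?w y * bsc_msq (?p y)) (at 0) \<and> f1 0 = - (?w y * bsc_mean (?p y))" for y
    by (rule column_gallF_derivatives[OF channel_nonneg[OF W] channel_nonneg[OF W]])
      (auto simp: output_weight_def posterior_def)
  then obtain f1 where f1:
    "\<And>y \<rho>. \<rho> > -1 \<Longrightarrow> (column_gallF (W False y) (W True y) has_real_derivative f1 y \<rho>) (at \<rho>)"
    "\<And>y. (f1 y has_real_derivative ?w y * bsc_msq (?p y)) (at 0)"
    "\<And>y. f1 y 0 = - (?w y * bsc_mean (?p y))"
    by metis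
  have "- deriv (deriv (E0 W)) 0 = ((\<Sum>y\<in>UNIV. ?w y * bsc_msq (?p y)) - (\<Sum>y\<in>UNIV. f1 y 0)\<^sup>2) / ln 2"
  proof (rule deriv2_neg_log2_at_0[where r = 1 and F = "\<lambda>\<rho>. \<Sum>y\<in>UNIV. column_gallF (W False y) (W True y) \<rho>"])
    show "((\<lambda>\<rho>. \<Sum>y\<in>UNIV. column_gallF (W False y) (W True y) \<rho>) has_real_derivative (\<Sum>y\<in>UNIV. f1 y x)) (at x)"
      if "x \<in> ball 0 1" for x
      using that by (auto intro!: DERIV_sum f1(1) simp: dist_real_def)
    show "((\<lambda>\<rho>. \<Sum>y\<in>UNIV. f1 y \<rho>) has_real_derivative (\<Sum>y\<in>UNIV. ?w y * bsc_msq (?p y))) (at 0)"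
      by (intro DERIV_sum f1(2))
    show "(\<Sum>y\<in>UNIV. column_gallF (W False y) (W True y) 0) = 1"
      using sum_output_weight[OF W] channel_nonneg[OF W]
      by (simp add: column_gallF_at_0 output_weight_def)
    show "E0 W x = - log 2 (\<Sum>y\<in>UNIV. column_gallF (W False y) (W True y) x)" if "x \<in> ball 0 1" for x
      using that W by (simp add: E0_def gallF_eq_sum_column_gallF dist_real_def)
  qed simp
  then show ?thesis by (simp add: dispersion_def f1(3) sum_negf)
qed

lemma F_bsc_eq: "F_bsc \<rho> C = 2 * column_gallF (bin_entropy_inv (1 - C)) (1 - bin_entropy_inv (1 - C)) \<rho>"
proof -
  define e where "e = bin_entropy_inv (1 - C)"
  define X where "X = e powr (1 / (1 + \<rho>)) + (1 - e) powr (1 / (1 + \<rho>))"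
  have "column_gallF e (1 - e) \<rho> = X powr (1 + \<rho>) / (2 * 2 powr \<rho>)"
    unfolding column_gallF_def X_def[symmetric] by (simp add: X_def powr_divide powr_add)
  moreover have "F_bsc \<rho> C = X powr (1 + \<rho>) / 2 powr \<rho>"
    unfolding F_bsc_def Let_def e_def[symmetric] X_def[symmetric] by (simp add: powr_minus_divide)
  ultimately show ?thesis unfolding e_def[symmetric] by simp
qed

lemma V_bec_eq: "V_bec C = ln 2 * C * (1 - C)"
proof -
  have "- deriv (deriv (\<lambda>\<rho>. - log 2 (F_bec \<rho> C))) 0
      = (C * (ln 2 * ln 2) - (C * (exp (- 0 * ln 2) * (- ln 2)))\<^sup>2) / ln 2"
  proof (rule deriv2_neg_log2_at_0[where r = 1 and F = "\<lambda>\<rho>. 1 + (exp (- \<rho> * ln 2) - 1) * C"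
        and dF = "\<lambda>\<rho>. C * (exp (- \<rho> * ln 2) * (- ln 2))"])
    show "((\<lambda>\<rho>. C * (exp (- \<rho> * ln 2) * (- ln 2))) has_real_derivative C * (ln 2 * ln 2)) (at 0)"
      by (auto intro!: derivative_eq_intros)
  qed (auto intro!: derivative_eq_intros simp: F_bec_def powr_def)
  then have "V_bec C = (C * (ln 2 * ln 2) - (C * ln 2)\<^sup>2) / ln 2"
    unfolding V_bec_def by simp
  also have "\<dots> = ln 2 * C * (1 - C)"
    using ln_gt_zero[of "2::real"] by (simp add: power2_eq_square field_simps)
  finally show ?thesis .
qed

lemma V_bsc_eq:
  assumes "0 \<le> C" "C \<le> 1"
  shows "V_bsc C = (bsc_msq (bin_entropy_inv (1 - C)) - (C * ln 2)\<^sup>2) / ln 2"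
proof -
  define e where "e = bin_entropy_inv (1 - C)"
  have e: "0 \<le> e" "e \<le> 1/2" "bsc_mean e = C * ln 2"
    using bin_entropy_inv_bsc_mean[OF assms] by (simp_all add: e_def)
  obtain f1 where f1: "\<And>\<rho>. \<rho> > -1 \<Longrightarrow> (column_gallF e (1 - e) has_real_derivative f1 \<rho>) (at \<rho>)"
    "(f1 has_real_derivative 1 / 2 * bsc_msq e) (at 0)" "f1 0 = - (1 / 2 * bsc_mean e)"
    using column_gallF_derivatives[of e "1 - e"] e by auto
  have "- deriv (deriv (\<lambda>\<rho>. - log 2 (2 * column_gallF e (1 - e) \<rho>))) 0 = (bsc_msq e - (2 * f1 0)\<^sup>2) / ln 2"
  proof (rule deriv2_neg_log2_at_0[where r = 1 and dF = "\<lambda>\<rho>. 2 * f1 \<rho>"])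
    show "((\<lambda>\<rho>. 2 * column_gallF e (1 - e) \<rho>) has_real_derivative 2 * f1 x) (at x)"
      if "x \<in> ball 0 1" for x
      using that by (intro DERIV_cmult f1(1)) (simp add: dist_real_def)
    show "((\<lambda>\<rho>. 2 * f1 \<rho>) has_real_derivative bsc_msq e) (at 0)"
      using DERIV_cmult[OF f1(2), of 2] by simp
  qed (use e in \<open>simp_all add: column_gallF_at_0\<close>)
  then show ?thesis by (simp add: V_bsc_def F_bsc_eq f1(3) e(3) e_def[symmetric])
qed

theorem mainTheorem11:
  fixes W :: "bool \<Rightarrow> 'y::finite \<Rightarrow> real"
  assumes "bims W"
  shows "V_bec (capacity W) \<le> dispersion W \<and> dispersion W \<le> V_bsc (capacity W)"
proof -
  have W: "channel W" using assms by (simp add: bims_def)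
  let ?w = "output_weight W" and ?p = "posterior W"
  define X where "X = (\<Sum>y\<in>UNIV. ?w y * bsc_mean (?p y))"
  define M where "M = (\<Sum>y\<in>UNIV. ?w y * bsc_msq (?p y))"
  define e where "e = bin_entropy_inv (1 - capacity W)"
  have w: "\<And>y. 0 \<le> ?w y" "(\<Sum>y\<in>UNIV. ?w y) = 1" and p: "\<And>y. 0 \<le> ?p y \<and> ?p y \<le> 1"
    using W by (simp_all add: output_weight_nonneg sum_output_weight posterior_bounds)
  have "0 \<le> X" "X \<le> (\<Sum>y\<in>UNIV. ?w y * ln 2)"
    unfolding X_def using w p bsc_mean_bounds by (auto intro!: sum_nonneg sum_mono mult_left_mono)
  then have C: "capacity W = X / ln 2" "0 \<le> capacity W" "capacity W \<le> 1"
    using W w(2) by (simp_all add: capacity_eq X_def sum_distrib_right[symmetric])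
  then have e: "0 \<le> e" "e \<le> 1/2" "bsc_mean e = X"
    using bin_entropy_inv_bsc_mean[of "capacity W"] by (simp_all add: e_def)
  have "V_bec (capacity W) = (ln 2 * X - X\<^sup>2) / ln 2"
    using C(1) by (simp add: V_bec_eq power2_eq_square field_simps)
  moreover have "V_bsc (capacity W) = (bsc_msq e - X\<^sup>2) / ln 2"
    using C V_bsc_eq e(3) by (simp add: e_def)
  moreover have "dispersion W = (M - X\<^sup>2) / ln 2"
    using dispersion_eq[OF W] by (simp add: M_def X_def)
  moreover have "ln 2 * X \<le> M"
    unfolding X_def M_def sum_distrib_left
    using w p ln2_bsc_mean_le_bsc_msq by (intro sum_mono) (metis mult.left_commute mult_left_mono)
  moreover have "M \<le> bsc_msq e"
    unfolding M_def using w p e by (intro sum_bsc_msq_le) (simp_all add: X_def)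
  ultimately show ?thesis by (simp add: divide_right_mono)
qed

end
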